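(* Let $d$ and $k$ be positive integers with $k\le d$. The number of $312$-avoiding affine permutations in $\widetilde{\mathfrak S}_d$ that have exactly $k$ cut points modulo $d$ is $\binom{2d-k-1}{d-1}$.
   Context: An affine permutation $\pi\in\widetilde{\mathfrak S}_d$ is a bijection $\pi:\mathbb Z\to\mathbb Z$ such that $\pi(i+d)=\pi(i)+d$ for all $i\in\mathbb Z$ and $\sum_{i=0}^{d-1}(\pi(i)-i)=0$. It is $312$-avoiding if there are no integers $i<j<k$ with $\pi(j)<\pi(k)<\pi(i)$. A cut point of $\pi$ is an integer $j$ such that $\pi(i)<\pi(k)$ for all integers $i\le j<k$. If $j$ is a cut point then so is every integer congruent to $j$ modulo $d$; "number of cut points modulo $d$" means the number of residue classes modulo $d$ consisting of cut points. *)

theory Defs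
  imports Main
begin

definition affine_perm :: "nat \<Rightarrow> (int \<Rightarrow> int) \<Rightarrow> bool" where
  "affine_perm d \<pi> \<longleftrightarrow> bij \<pi> \<and> (\<forall>i. \<pi> (i + int d) = \<pi> i + int d)
     \<and> (\<Sum>i\<in>{0..<int d}. \<pi> i - i) = 0"

definition avoids312 :: "(int \<Rightarrow> int) \<Rightarrow> bool" where
  "avoids312 \<pi> \<longleftrightarrow> \<not> (\<exists>i j k. i < j \<and> j < k \<and> \<pi> j < \<pi> k \<and> \<pi> k < \<pi> i)"

definition cut_point :: "(int \<Rightarrow> int) \<Rightarrow> int \<Rightarrow> bool" where
  "cut_point \<pi> j \<longleftrightarrow> (\<forall>i k. i \<le> j \<and> j < k \<longrightarrow> \<pi> i < \<pi> k)"

text \<open>Number of residue classes mod d consisting of cut points.\<close>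
definition num_cut_points :: "nat \<Rightarrow> (int \<Rightarrow> int) \<Rightarrow> nat" where
  "num_cut_points d \<pi> = card {r \<in> {0..<int d}. cut_point \<pi> r}"

end

(*
  Let c be the largest cut point of the affine permutation \<pi> in {0..<d}. Since \<pi> maps the
  integers \<le> c onto themselves (this is where the window-sum condition is used), the window
  \<pi>(c+1), ..., \<pi>(c+d), shifted down by c+1, is a 312-avoiding permutation s of {0..<d}, and
  \<pi> is the periodic extension of s. Cut points of \<pi> correspond to cuts of s, and maximality
  of c says that s has no cut at the positions 1, ..., d-c-1; so \<pi> corresponds to a pair (s, t)
  with t = d - c not exceeding the first cut of s.

  Writing s = (a+1) 0 (b+p) around its minimum, the first cut of s is at p, a and b are
  312-avoiding, and the cuts of s are those of b plus one. The count thus becomes the coefficient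
  of x^(d-k) in (x C)' C^(k-1), where C = 1 + x C^2 is the Catalan series, and this coefficient
  is binomial(2d-k-1, d-k).
*)
theory Submission
  imports Defs "HOL-Computational_Algebra.Formal_Power_Series"
begin

unbundle fps_syntax

section \<open>312-avoiding permutations as lists\<close>

definition list_avoids312 :: "int list \<Rightarrow> bool" where
  "list_avoids312 s \<longleftrightarrow>
     \<not> (\<exists>i j l. i < j \<and> j < l \<and> l < length s \<and> s!j < s!l \<and> s!l < s!i)"

definition perm_list :: "nat \<Rightarrow> int list \<Rightarrow> bool" where
  "perm_list n s \<longleftrightarrow> distinct s \<and> set s = {0..<int n}"

definition Av312 :: "nat \<Rightarrow> int list set" where
  "Av312 n = {s. perm_list n s \<and> list_avoids312 s}"

definition list_cut :: "int list \<Rightarrow> nat \<Rightarrow> bool" where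
  "list_cut s j \<longleftrightarrow> (\<forall>i l. i < j \<and> j \<le> l \<and> l < length s \<longrightarrow> s!i < s!l)"

definition num_list_cuts :: "int list \<Rightarrow> nat" where
  "num_list_cuts s = card {j \<in> {1..length s}. list_cut s j}"

definition join_at_min :: "nat \<Rightarrow> int list \<Rightarrow> int list \<Rightarrow> int list" where
  "join_at_min p a b = map (\<lambda>x. x + 1) a @ 0 # map (\<lambda>x. x + int p) b"

lemma perm_list_length: "perm_list n s \<Longrightarrow> length s = n"
  unfolding perm_list_def using distinct_card[of s] by auto

lemma Av312_length: "s \<in> Av312 n \<Longrightarrow> length s = n"
  by (simp add: Av312_def perm_list_length)

lemma Av312_range: "s \<in> Av312 n \<Longrightarrow> x \<in> set s \<Longrightarrow> 0 \<le> x \<and> x < int n"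
  by (auto simp: Av312_def perm_list_def)

lemma finite_Av312: "finite (Av312 n)"
proof (rule finite_subset)
  show "Av312 n \<subseteq> {s. set s \<subseteq> {0..<int n} \<and> length s = n}"
    by (auto simp: Av312_def perm_list_def perm_list_length)
qed (rule finite_lists_length_eq, simp)

lemma Av312_0: "Av312 0 = {[]}"
  by (auto simp: Av312_def perm_list_def list_avoids312_def)

lemma list_avoids312_shift: "list_avoids312 (map (\<lambda>x. x + c) s) \<longleftrightarrow> list_avoids312 s"
  unfolding list_avoids312_def by auto

lemma list_avoids312_appendD:
  assumes "list_avoids312 (u @ w)"
  shows "list_avoids312 u" and "list_avoids312 w"
proof -
  show "list_avoids312 u"
  proof (unfold list_avoids312_def, clarify)
    fix i j l assume *: "i < j" "j < l" "l < length u" "u!j < u!l" "u!l < u!i"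
    then have "l < length (u @ w)" "(u @ w)!j < (u @ w)!l" "(u @ w)!l < (u @ w)!i"
      by (simp_all add: nth_append)
    then show False using assms * unfolding list_avoids312_def by blast
  qed
  show "list_avoids312 w"
  proof (unfold list_avoids312_def, clarify)
    fix i j l assume *: "i < j" "j < l" "l < length w" "w!j < w!l" "w!l < w!i"
    let ?n = "length u"
    have "?n + i < ?n + j" "?n + j < ?n + l" "?n + l < length (u @ w)"
      "(u @ w)!(?n + j) < (u @ w)!(?n + l)" "(u @ w)!(?n + l) < (u @ w)!(?n + i)"
      using * by (simp_all add: nth_append)
    then show False using assms unfolding list_avoids312_def by blast
  qed
qed

lemma list_avoids312_join:
  assumes u: "list_avoids312 u" and w: "list_avoids312 w"
    and z_u: "\<And>x. x \<in> set u \<Longrightarrow> z < x" and z_w: "\<And>y. y \<in> set w \<Longrightarrow> z < y"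
    and u_w: "\<And>x y. x \<in> set u \<Longrightarrow> y \<in> set w \<Longrightarrow> x < y"
  shows "list_avoids312 (u @ z # w)"
proof (unfold list_avoids312_def, clarify)
  let ?s = "u @ z # w" and ?n = "length u"
  fix i j l assume *: "i < j" "j < l" "l < length ?s" "?s!j < ?s!l" "?s!l < ?s!i"
  consider "l < ?n" | "l = ?n" | "i < ?n" "?n < l" | "i = ?n" "?n < l" | "?n < i"
    using * by linarith
  then show False
  proof cases
    case 1
    then show False using * u unfolding list_avoids312_def by (auto simp: nth_append)
  next
    case 2
    then show False using * z_u[of "u!j"] by (auto simp: nth_append)
  next
    case 3
    then have "?s!i \<in> set u" "?s!l \<in> set w"
      using * by (auto simp: nth_append nth_Cons')
    then show False using u_w * by fastforce
  next
    case 4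
    then have "?s!l \<in> set w" using * 4 by (auto simp: nth_append nth_Cons')
    moreover have "?s!l < z" using * 4 by (simp add: nth_append)
    ultimately show False using z_w by fastforce
  next
    case 5
    let ?i = "i - Suc ?n" and ?j = "j - Suc ?n" and ?l = "l - Suc ?n"
    have "?i < ?j" "?j < ?l" "?l < length w" "w!?j < w!?l" "w!?l < w!?i"
      using * 5 by (auto simp: nth_append nth_Cons')
    then show False using w[unfolded list_avoids312_def] by blast
  qed
qed

lemma list_avoids312_prefix_below_suffix:
  assumes "list_avoids312 (u @ z # w)" "x \<in> set u" "y \<in> set w" "z < y"
  shows "\<not> y < x"
proof
  assume yx: "y < x"
  obtain i where i: "i < length u" "u!i = x" using assms(2) by (auto simp: in_set_conv_nth)
  obtain l where l: "l < length w" "w!l = y" using assms(3) by (auto simp: in_set_conv_nth)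
  let ?s = "u @ z # w"
  have "i < length u" "length u < length u + 1 + l" "length u + 1 + l < length ?s"
    "?s!(length u) < ?s!(length u + 1 + l)" "?s!(length u + 1 + l) < ?s!i"
    using i l assms yx by (auto simp: nth_append)
  then show False using assms(1) unfolding list_avoids312_def by blast
qed

lemma lower_block_eq_interval:
  fixes A B :: "int set"
  assumes AB: "A \<union> B = {lo..<hi}" "A \<inter> B = {}" and below: "\<And>x y. x \<in> A \<Longrightarrow> y \<in> B \<Longrightarrow> x < y"
  shows "A = {lo..<lo + int (card A)}"
proof -
  have fin: "finite A" using AB by (metis finite_Un finite_atLeastLessThan_int)
  have "{lo..x} \<subseteq> A" if x: "x \<in> A" for x
  proof
    fix v assume v: "v \<in> {lo..x}"
    have "x < hi" using x AB(1) by auto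
    then have "v \<in> A \<union> B" using v AB(1) by auto
    moreover have "v \<notin> B" using below[OF x] v by fastforce
    ultimately show "v \<in> A" by blast
  qed
  then have "card {lo..x} \<le> card A" if "x \<in> A" for x
    using that fin by (intro card_mono) auto
  then have "A \<subseteq> {lo..<lo + int (card A)}"
    using AB by fastforce
  moreover have "card A = card {lo..<lo + int (card A)}" by simp
  ultimately show ?thesis by (intro card_subset_eq) simp_all
qed

lemma shifted_in_Av312:
  assumes "distinct u" "set u = {lo..<lo + int m}" "list_avoids312 u"
  shows "map (\<lambda>x. x - lo) u \<in> Av312 m"
proof -
  have "map (\<lambda>x. x - lo) u = map (\<lambda>x. x + (- lo)) u" by simp
  moreover have "(\<lambda>x. x - lo) ` {lo..<lo + int m} = {0..<int m}"
    by (auto intro!: image_eqI[where x="x + lo" for x])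
  ultimately show ?thesis
    using assms list_avoids312_shift[of "- lo" u]
    by (auto simp: Av312_def perm_list_def distinct_map inj_on_def)
qed

lemma join_at_min_length: "length (join_at_min p a b) = length a + 1 + length b"
  by (simp add: join_at_min_def)

lemma join_at_min_in_Av312:
  assumes p: "1 \<le> p" "p \<le> n" and a: "a \<in> Av312 (p - 1)" and b: "b \<in> Av312 (n - p)"
  shows "join_at_min p a b \<in> Av312 n"
proof -
  let ?u = "map (\<lambda>x. x + 1) a" and ?w = "map (\<lambda>x. x + int p) b"
  have set_u: "set ?u = {1..<int p}" using a p by (auto simp: Av312_def perm_list_def)
  have set_w: "set ?w = {int p..<int n}" using b p by (auto simp: Av312_def perm_list_def)
  have "distinct ?u" "distinct ?w"
    using a b by (auto simp: Av312_def perm_list_def distinct_map inj_on_def)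
  then have "perm_list n (?u @ 0 # ?w)"
    using set_u set_w p by (auto simp: perm_list_def)
  moreover have "list_avoids312 (?u @ 0 # ?w)"
    using a b set_u set_w p
    by (intro list_avoids312_join) (auto simp: Av312_def list_avoids312_shift)
  ultimately show ?thesis by (simp add: Av312_def join_at_min_def)
qed

lemma join_at_min_inj:
  assumes "length a = p - 1" "length a' = p' - 1" "1 \<le> p" "1 \<le> p'"
    and "\<forall>x\<in>set a. 0 \<le> x" "\<forall>x\<in>set b. 0 \<le> x"
    and eq: "join_at_min p a b = join_at_min p' a' b'"
  shows "p = p' \<and> a = a' \<and> b = b'"
proof -
  have "0 \<notin> set (map (\<lambda>x. x + 1) a)" "0 \<notin> set (map (\<lambda>x. x + int p) b)"
    using assms by auto
  from append_Cons_eq_iff[OF this] eq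
  have ua: "map (\<lambda>x. x + 1) a = map (\<lambda>x. x + 1) a'"
    and wb: "map (\<lambda>x. x + int p) b = map (\<lambda>x. x + int p') b'"
    by (auto simp: join_at_min_def)
  have "p = p'" using arg_cong[OF ua, of length] assms(1-4) by simp
  moreover have "inj (\<lambda>x::int. x + 1)" "inj (\<lambda>x::int. x + int p)" by (simp_all add: inj_def)
  ultimately show ?thesis using ua wb by (simp add: inj_map_eq_map)
qed

lemma Av312_split_at_min:
  assumes s: "s \<in> Av312 n" and n: "1 \<le> n"
  obtains p a b where "1 \<le> p" "p \<le> n" "a \<in> Av312 (p - 1)" "b \<in> Av312 (n - p)"
    "s = join_at_min p a b"
proof -
  have len: "length s = n" and dist: "distinct s" and set_s: "set s = {0..<int n}"
    and av: "list_avoids312 s"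
    using s by (auto simp: Av312_def perm_list_def perm_list_length)
  have "0 \<in> set s" using set_s n by simp
  then obtain q where q: "q < n" "s!q = 0" using len by (auto simp: in_set_conv_nth)
  define u where "u = take q s"
  define w where "w = drop (Suc q) s"
  have s_eq: "s = u @ 0 # w" using id_take_nth_drop[of q s] q len by (simp add: u_def w_def)
  have len_u: "length u = q" using q len by (simp add: u_def)
  have dist_u: "distinct u" and dist_w: "distinct w" and disj: "set u \<inter> set w = {}"
    and zero: "0 \<notin> set u" "0 \<notin> set w"
    using dist by (simp_all add: s_eq)
  have "set u \<union> set w = set s - {0}" using zero unfolding s_eq by auto
  also have "\<dots> = {1..<int n}" unfolding set_s by auto
  finally have un: "set u \<union> set w = {1..<int n}" .
  have av_uw: "list_avoids312 (u @ 0 # w)" using av s_eq by simp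
  have below: "x < y" if "x \<in> set u" "y \<in> set w" for x y
  proof -
    have "y \<in> {1..<int n}" "x \<noteq> y" using that un disj by blast+
    then show ?thesis using list_avoids312_prefix_below_suffix[OF av_uw that] by simp
  qed
  have set_u: "set u = {1..<1 + int q}"
    using lower_block_eq_interval[OF un disj below] distinct_card[OF dist_u] len_u by simp
  have "set w = {1..<int n} - set u" using un disj by blast
  also have "\<dots> = {1 + int q..<1 + int q + int (n - Suc q)}"
    unfolding set_u using q by auto
  finally have set_w: "set w = {1 + int q..<1 + int q + int (n - Suc q)}" .
  define a where "a = map (\<lambda>x. x - 1) u"
  define b where "b = map (\<lambda>x. x - (1 + int q)) w"
  have "a \<in> Av312 q"
    unfolding a_def using dist_u set_u list_avoids312_appendD(1)[of u "0 # w"] av_uw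
    by (intro shifted_in_Av312) auto
  moreover have "b \<in> Av312 (n - Suc q)"
    unfolding b_def using dist_w set_w list_avoids312_appendD(2)[of "u @ [0]" w] av_uw
    by (intro shifted_in_Av312) auto
  moreover have "s = join_at_min (Suc q) a b"
    by (simp add: s_eq a_def b_def join_at_min_def comp_def)
  ultimately show thesis using that[of "Suc q" a b] q by simp
qed

lemma inj_on_join_at_min:
  "inj_on (\<lambda>(p, a, b). join_at_min p a b) (SIGMA p:{1..n}. Av312 (p - 1) \<times> Av312 (n - p))"
proof (rule inj_onI)
  fix x y
  assume x: "x \<in> (SIGMA p:{1..n}. Av312 (p - 1) \<times> Av312 (n - p))"
    and y: "y \<in> (SIGMA p:{1..n}. Av312 (p - 1) \<times> Av312 (n - p))"
    and eq: "(\<lambda>(p, a, b). join_at_min p a b) x = (\<lambda>(p, a, b). join_at_min p a b) y"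
  obtain p a b p' a' b' where xy: "x = (p, a, b)" "y = (p', a', b')" by (cases x, cases y) auto
  have "p = p' \<and> a = a' \<and> b = b'"
    using x y eq unfolding xy
    by (intro join_at_min_inj) (auto dest: Av312_range simp: Av312_length)
  then show "x = y" using xy by simp
qed

lemma Av312_eq_join_at_min_image:
  assumes "1 \<le> n"
  shows "Av312 n = (\<lambda>(p, a, b). join_at_min p a b) ` (SIGMA p:{1..n}. Av312 (p - 1) \<times> Av312 (n - p))"
proof
  show "Av312 n \<subseteq> (\<lambda>(p, a, b). join_at_min p a b) ` (SIGMA p:{1..n}. Av312 (p - 1) \<times> Av312 (n - p))"
  proof
    fix s assume "s \<in> Av312 n"
    then obtain p a b where "1 \<le> p" "p \<le> n" "a \<in> Av312 (p - 1)" "b \<in> Av312 (n - p)"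
      "s = join_at_min p a b"
      using assms by (rule Av312_split_at_min)
    then show "s \<in> (\<lambda>(p, a, b). join_at_min p a b) ` (SIGMA p:{1..n}. Av312 (p - 1) \<times> Av312 (n - p))"
      by (intro image_eqI[of _ _ "(p, a, b)"]) auto
  qed
qed (auto intro: join_at_min_in_Av312)

lemma sum_Av312_split:
  assumes "1 \<le> n"
  shows "(\<Sum>s\<in>Av312 n. f s)
    = (\<Sum>p=1..n. \<Sum>a\<in>Av312 (p - 1). \<Sum>b\<in>Av312 (n - p). f (join_at_min p a b))"
proof -
  have "(\<Sum>s\<in>Av312 n. f s)
      = (\<Sum>(p, a, b)\<in>(SIGMA p:{1..n}. Av312 (p - 1) \<times> Av312 (n - p)). f (join_at_min p a b))"
    unfolding Av312_eq_join_at_min_image[OF assms]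
    by (subst sum.reindex[OF inj_on_join_at_min]) (simp add: case_prod_unfold)
  also have "\<dots> = (\<Sum>p=1..n. \<Sum>(a, b)\<in>Av312 (p - 1) \<times> Av312 (n - p). f (join_at_min p a b))"
    by (subst sum.Sigma) (auto simp: finite_Av312 case_prod_unfold)
  also have "\<dots> = (\<Sum>p=1..n. \<Sum>a\<in>Av312 (p - 1). \<Sum>b\<in>Av312 (n - p). f (join_at_min p a b))"
    by (simp add: sum.cartesian_product finite_Av312)
  finally show ?thesis .
qed

lemma card_Av312_split:
  assumes "1 \<le> n"
  shows "card {s \<in> Av312 n. P s}
    = (\<Sum>p=1..n. \<Sum>a\<in>Av312 (p - 1). card {b \<in> Av312 (n - p). P (join_at_min p a b)})"
  using sum_Av312_split[OF assms, of "\<lambda>s. of_bool (P s) :: nat"]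
  by (simp add: sum.If_cases finite_Av312 Int_def conj_commute)

lemma list_cut_0: "list_cut s 0"
  by (simp add: list_cut_def)

lemma list_cut_length: "list_cut s (length s)"
  by (simp add: list_cut_def)

lemma list_cut_shift: "list_cut (map (\<lambda>x. x + c) s) j \<longleftrightarrow> list_cut s j"
  by (simp add: list_cut_def)

lemma list_cut_append:
  assumes "\<And>x y. x \<in> set u \<Longrightarrow> y \<in> set w \<Longrightarrow> x < y"
  shows "list_cut (u @ w) (length u + j) \<longleftrightarrow> list_cut w j"
proof
  assume cut: "list_cut (u @ w) (length u + j)"
  show "list_cut w j"
  proof (unfold list_cut_def, intro allI impI)
    fix i l assume "i < j \<and> j \<le> l \<and> l < length w"
    then show "w!i < w!l"
      using cut[unfolded list_cut_def, rule_format, of "length u + i" "length u + l"]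
      by (simp add: nth_append)
  qed
next
  assume cut: "list_cut w j"
  show "list_cut (u @ w) (length u + j)"
  proof (unfold list_cut_def, intro allI impI)
    fix i l assume il: "i < length u + j \<and> length u + j \<le> l \<and> l < length (u @ w)"
    show "(u @ w)!i < (u @ w)!l"
    proof (cases "i < length u")
      case True
      moreover have "w!(l - length u) \<in> set w" using il by (intro nth_mem) auto
      ultimately show ?thesis using il assms[of "u!i" "w!(l - length u)"] by (simp add: nth_append)
    next
      case False
      then have "i - length u < j" "j \<le> l - length u" "l - length u < length w"
        using il by auto
      then have "w!(i - length u) < w!(l - length u)" using cut unfolding list_cut_def by blast
      then show ?thesis using False il by (simp add: nth_append)
    qed
  qed
qed

lemma not_list_cut_before_min:
  assumes "0 < j" "j \<le> length u" "\<And>x. x \<in> set u \<Longrightarrow> z < x"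
  shows "\<not> list_cut (u @ z # w) j"
proof
  assume "list_cut (u @ z # w) j"
  then have "(u @ z # w)!0 < (u @ z # w)!(length u)"
    using assms(1,2) unfolding list_cut_def by (elim allE[of _ 0] allE[of _ "length u"]) simp
  moreover have "u \<noteq> []" using assms(1,2) by auto
  ultimately show False using assms(3)[of "u!0"] by (simp add: nth_append)
qed

lemma list_cut_join_at_min:
  assumes a: "a \<in> Av312 (p - 1)" and b: "b \<in> Av312 m" and p: "1 \<le> p" and j: "1 \<le> j"
  shows "list_cut (join_at_min p a b) j \<longleftrightarrow> p \<le> j \<and> list_cut b (j - p)"
proof (cases "p \<le> j")
  case True
  let ?u = "map (\<lambda>x. x + 1) a @ [0]"
  have "length ?u = p" using Av312_length[OF a] p by simp
  moreover have "x < y" if "x \<in> set ?u" "y \<in> set (map (\<lambda>x. x + int p) b)" for x y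
  proof -
    have "x' + 1 < int p" if "x' \<in> set a" for x' using Av312_range[OF a that] p by linarith
    then have "x < int p" using that(1) p by auto
    moreover have "int p \<le> y" using that(2) Av312_range[OF b] by auto
    ultimately show ?thesis by simp
  qed
  ultimately have "list_cut (?u @ map (\<lambda>x. x + int p) b) (p + (j - p)) \<longleftrightarrow> list_cut b (j - p)"
    using list_cut_append[of ?u] list_cut_shift by metis
  then show ?thesis using True by (simp add: join_at_min_def)
next
  case False
  then have "\<not> list_cut (join_at_min p a b) j"
    unfolding join_at_min_def using Av312_length[OF a] Av312_range[OF a] j
    by (intro not_list_cut_before_min) auto
  then show ?thesis using False by simp
qed

lemma num_list_cuts_join_at_min:
  assumes a: "a \<in> Av312 (p - 1)" and b: "b \<in> Av312 m" and p: "1 \<le> p"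
  shows "num_list_cuts (join_at_min p a b) = Suc (num_list_cuts b)"
proof -
  have "length (join_at_min p a b) = p + m"
    using Av312_length[OF a] Av312_length[OF b] p by (simp add: join_at_min_length)
  then have "{j \<in> {1..length (join_at_min p a b)}. list_cut (join_at_min p a b) j}
      = (\<lambda>j. j + p) ` {j \<in> {0..m}. list_cut b j}"
    using list_cut_join_at_min[OF a b p] p
    apply (auto simp: image_iff)
    subgoal for j by (rule exI[of _ "j - p"]) auto
    done
  then have "num_list_cuts (join_at_min p a b) = card {j \<in> {0..m}. list_cut b j}"
    unfolding num_list_cuts_def by (simp add: card_image)
  also have "{j \<in> {0..m}. list_cut b j} = insert 0 {j \<in> {1..m}. list_cut b j}"
    using list_cut_0 by auto
  finally show ?thesis unfolding num_list_cuts_def using Av312_length[OF b] by simp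
qed

lemma no_list_cut_below_join_at_min_iff:
  assumes a: "a \<in> Av312 (p - 1)" and b: "b \<in> Av312 m" and p: "1 \<le> p" and t: "1 \<le> t"
  shows "(\<forall>j\<in>{1..<t}. \<not> list_cut (join_at_min p a b) j) \<longleftrightarrow> t \<le> p"
  using list_cut_join_at_min[OF a b p] list_cut_0 p t by (auto simp: not_le)

lemma card_Av312_rec:
  assumes "1 \<le> n"
  shows "card (Av312 n) = (\<Sum>p=1..n. card (Av312 (p - 1)) * card (Av312 (n - p)))"
  using card_Av312_split[OF assms, of "\<lambda>_. True"] by simp

lemma num_list_cuts_Nil: "num_list_cuts [] = 0"
  by (simp add: num_list_cuts_def)

lemma card_Av312_num_list_cuts_0:
  "card {s \<in> Av312 n. num_list_cuts s = 0} = (if n = 0 then 1 else 0)"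
proof (cases "n = 0")
  case True
  have "{s \<in> Av312 0. num_list_cuts s = 0} = {[]}" by (auto simp: Av312_0 num_list_cuts_Nil)
  then show ?thesis using True by simp
next
  case False
  have "num_list_cuts s \<noteq> 0" if "s \<in> Av312 n" for s
  proof -
    have "length s \<in> {j \<in> {1..length s}. list_cut s j}"
      using False Av312_length[OF that] list_cut_length by auto
    then show ?thesis unfolding num_list_cuts_def by (subst card_0_eq) auto
  qed
  then have "{s \<in> Av312 n. num_list_cuts s = 0} = {}" by blast
  then show ?thesis using False by (metis card.empty)
qed

lemma card_Av312_num_list_cuts_Suc:
  "card {s \<in> Av312 n. num_list_cuts s = Suc k}
    = (\<Sum>p=1..n. card (Av312 (p - 1)) * card {b \<in> Av312 (n - p). num_list_cuts b = k})"
proof (cases "n = 0")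
  case True
  then show ?thesis by (simp add: Av312_0 num_list_cuts_Nil)
next
  case False
  have "{b \<in> Av312 (n - p). num_list_cuts (join_at_min p a b) = Suc k}
      = {b \<in> Av312 (n - p). num_list_cuts b = k}"
    if "p \<in> {1..n}" "a \<in> Av312 (p - 1)" for p a
    using that num_list_cuts_join_at_min by auto
  then show ?thesis
    using False by (simp add: card_Av312_split)
qed

definition marked_Av312 :: "nat \<Rightarrow> nat \<Rightarrow> (int list \<times> nat) set" where
  "marked_Av312 n k =
     (SIGMA s:{s \<in> Av312 n. num_list_cuts s = k}. {t \<in> {1..n}. \<forall>j\<in>{1..<t}. \<not> list_cut s j})"

lemma card_marked_Av312:
  assumes n: "1 \<le> n" and k: "1 \<le> k"
  shows "card (marked_Av312 n k) = (\<Sum>p=1..n. p * card (Av312 (p - 1)) * card {b \<in> Av312 (n - p). num_list_cuts b = k - 1})"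
proof -
  let ?marks = "\<lambda>s. card {t \<in> {1..n}. \<forall>j\<in>{1..<t}. \<not> list_cut s j}"
  have marks: "(if num_list_cuts (join_at_min p a b) = k then ?marks (join_at_min p a b) else 0)
      = (if num_list_cuts b = k - 1 then p else 0)"
    if "p \<in> {1..n}" "a \<in> Av312 (p - 1)" "b \<in> Av312 (n - p)" for p a b
  proof -
    have "{t \<in> {1..n}. \<forall>j\<in>{1..<t}. \<not> list_cut (join_at_min p a b) j} = {1..p}"
    proof (rule set_eqI)
      fix t
      show "t \<in> {t \<in> {1..n}. \<forall>j\<in>{1..<t}. \<not> list_cut (join_at_min p a b) j} \<longleftrightarrow> t \<in> {1..p}"
        using no_list_cut_below_join_at_min_iff[OF that(2,3), of t] that(1) by auto
    qed
    then show ?thesis using num_list_cuts_join_at_min[OF that(2,3)] that(1) k by auto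
  qed
  have "card (marked_Av312 n k) = (\<Sum>s\<in>{s \<in> Av312 n. num_list_cuts s = k}. ?marks s)"
    unfolding marked_Av312_def by (rule card_SigmaI) (simp_all add: finite_Av312)
  also have "\<dots> = (\<Sum>s\<in>Av312 n. if num_list_cuts s = k then ?marks s else 0)"
    by (rule sum.inter_filter) (rule finite_Av312)
  also have "\<dots> = (\<Sum>p=1..n. \<Sum>a\<in>Av312 (p - 1). \<Sum>b\<in>Av312 (n - p).
      if num_list_cuts (join_at_min p a b) = k then ?marks (join_at_min p a b) else 0)"
    by (rule sum_Av312_split[OF n])
  also have "\<dots> = (\<Sum>p=1..n. \<Sum>a\<in>Av312 (p - 1). \<Sum>b\<in>Av312 (n - p).
      if num_list_cuts b = k - 1 then p else 0)"
    by (intro sum.cong refl marks)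
  also have "\<dots> = (\<Sum>p=1..n. p * card (Av312 (p - 1)) * card {b \<in> Av312 (n - p). num_list_cuts b = k - 1})"
    by (simp add: sum.If_cases finite_Av312 Int_def conj_commute mult_ac)
  finally show ?thesis .
qed

section \<open>The Catalan generating function\<close>

lemma fps_X_mult_mult_nth:
  fixes f g :: "'a::comm_semiring_1 fps"
  assumes "1 \<le> n"
  shows "(fps_X * f * g) $ n = (\<Sum>p=1..n. f $ (p - 1) * g $ (n - p))"
proof -
  have "(fps_X * f * g) $ n = (f * g) $ (n - 1)"
    using assms by (simp add: mult.assoc)
  also have "\<dots> = (\<Sum>i=0..n - 1. f $ i * g $ (n - 1 - i))"
    by (simp add: fps_mult_nth)
  also have "\<dots> = (\<Sum>p=Suc 0..Suc (n - 1). f $ (p - 1) * g $ (n - p))"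
    unfolding sum.shift_bounds_cl_Suc_ivl by simp
  finally show ?thesis using assms by simp
qed

lemma catalan_fps_eq:
  fixes A :: "nat \<Rightarrow> 'a::comm_semiring_1"
  assumes "A 0 = 1" and "\<And>n. 1 \<le> n \<Longrightarrow> A n = (\<Sum>p=1..n. A (p - 1) * A (n - p))"
  shows "Abs_fps A = 1 + fps_X * (Abs_fps A)^2"
proof (rule fps_ext)
  fix n
  show "Abs_fps A $ n = (1 + fps_X * (Abs_fps A)^2) $ n"
    using assms fps_X_mult_mult_nth[of n "Abs_fps A" "Abs_fps A"]
    by (cases "n = 0") (simp_all add: power2_eq_square mult.assoc)
qed

lemma fps_convolution_power:
  fixes A :: "nat \<Rightarrow> 'a::comm_semiring_1" and F :: "nat \<Rightarrow> nat \<Rightarrow> 'a"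
  assumes "\<And>n. F n 0 = (if n = 0 then 1 else 0)"
    and "\<And>n k. F n (Suc k) = (\<Sum>p=1..n. A (p - 1) * F (n - p) k)"
  shows "Abs_fps (\<lambda>n. F n k) = (fps_X * Abs_fps A)^k"
proof (induction k)
  case 0
  show ?case by (rule fps_ext) (simp add: assms(1))
next
  case (Suc k)
  have "Abs_fps (\<lambda>n. F n (Suc k)) = fps_X * Abs_fps A * Abs_fps (\<lambda>n. F n k)"
  proof (rule fps_ext)
    fix n
    show "Abs_fps (\<lambda>n. F n (Suc k)) $ n = (fps_X * Abs_fps A * Abs_fps (\<lambda>n. F n k)) $ n"
      using fps_X_mult_mult_nth[of n "Abs_fps A" "Abs_fps (\<lambda>n. F n k)"] assms(2)
      by (cases "n = 0") simp_all
  qed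
  then show ?case using Suc.IH by (simp add: mult.assoc)
qed

lemma central_binomial_Suc: "2 * ((2 * j + 1) choose j) = (2 * Suc j) choose Suc j"
proof -
  have "Suc (2 * j) choose Suc j = Suc (2 * j) choose j"
    using binomial_symmetric[of j "Suc (2 * j)"] by (simp add: Suc_diff_le)
  then show ?thesis by simp
qed

lemma catalan_deriv_eq:
  fixes C :: "'a::comm_semiring_1 fps"
  assumes C: "C = 1 + fps_X * C^2"
  shows "fps_deriv (fps_X * C) = 1 + 2 * fps_X * C * fps_deriv (fps_X * C)"
proof -
  have "fps_X * C = fps_X + (fps_X * C)^2"
    by (subst C) (simp add: algebra_simps power2_eq_square)
  then have "fps_deriv (fps_X * C) = fps_deriv (fps_X + (fps_X * C)^2)"
    by (rule arg_cong)
  also have "\<dots> = 1 + 2 * fps_X * C * fps_deriv (fps_X * C)"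
    unfolding fps_deriv_add power2_eq_square fps_deriv_mult mult_2
    by (simp add: algebra_simps)
  finally show ?thesis .
qed

lemma catalan_power_Suc:
  fixes C :: "'a::comm_semiring_1 fps"
  assumes C: "C = 1 + fps_X * C^2"
  shows "C^Suc k = C^k + fps_X * C^(k + 2)"
proof -
  have "C^Suc k = C^k * (1 + fps_X * C^2)" by (subst C [symmetric]) (simp add: mult.commute)
  also have "\<dots> = C^k + fps_X * C^(k + 2)"
    by (simp only: distrib_left mult_1_right power_add) (simp add: mult_ac)
  finally show ?thesis .
qed

lemma catalan_deriv_mult_power_nth:
  fixes C :: "nat fps"
  assumes C: "C = 1 + fps_X * C^2"
  shows "(fps_deriv (fps_X * C) * C^k) $ j = (2 * j + k) choose j"
proof -
  define D where "D = fps_deriv (fps_X * C)"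
  have D: "D = 1 + (fps_X * (C * D) + fps_X * (C * D))"
    using catalan_deriv_eq[OF C] unfolding D_def[symmetric] by (simp add: mult_2 distrib_right mult.assoc)
  have C_0: "C $ 0 = 1" by (subst C) simp
  have D_0: "D $ 0 = 1" by (subst D) simp
  show ?thesis
    unfolding D_def[symmetric]
  proof (induction j arbitrary: k)
    case 0
    show ?case by (simp add: C_0 D_0 fps_power_zeroth)
  next
    case (Suc j)
    note IH_j = Suc.IH
    show ?case
    proof (induction k)
      case 0
      have "(D * C^0) $ Suc j = (1 + (fps_X * (C * D) + fps_X * (C * D))) $ Suc j"
        by (simp only: power_0 mult_1_right) (subst D, rule refl)
      also have "\<dots> = 2 * (D * C^1) $ j"
        by (simp only: fps_add_nth fps_X_mult_nth) (simp add: mult.commute)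
      finally show ?case using IH_j[of 1] central_binomial_Suc by simp
    next
      case (Suc k)
      have "D * C^Suc k = D * C^k + fps_X * (D * C^(k + 2))"
        unfolding catalan_power_Suc[OF C] by (simp add: distrib_left mult.left_commute)
      then have "(D * C^Suc k) $ Suc j = (D * C^k) $ Suc j + (D * C^(k + 2)) $ j"
        by (simp only: fps_add_nth fps_X_mult_nth) simp
      then show ?case using Suc.IH IH_j[of "k + 2"] by simp
    qed
  qed
qed

lemma catalan_weighted_convolution:
  fixes A :: "nat \<Rightarrow> nat" and F :: "nat \<Rightarrow> nat \<Rightarrow> nat"
  assumes A_0: "A 0 = 1" and A_rec: "\<And>n. 1 \<le> n \<Longrightarrow> A n = (\<Sum>p=1..n. A (p - 1) * A (n - p))"
    and F_0: "\<And>n. F n 0 = (if n = 0 then 1 else 0)"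
    and F_rec: "\<And>n k. F n (Suc k) = (\<Sum>p=1..n. A (p - 1) * F (n - p) k)"
    and k: "1 \<le> k" "k \<le> d"
  shows "(\<Sum>p=1..d. p * A (p - 1) * F (d - p) (k - 1)) = (2 * d - k - 1) choose (d - 1)"
proof -
  define C where "C = Abs_fps A"
  have C: "C = 1 + fps_X * C^2" unfolding C_def using A_0 A_rec by (rule catalan_fps_eq)
  have deriv: "Abs_fps (\<lambda>n. (n + 1) * A n) = fps_deriv (fps_X * C)"
    by (rule fps_ext) (simp add: C_def)
  have "(\<Sum>p=1..d. p * A (p - 1) * F (d - p) (k - 1))
      = (fps_X * Abs_fps (\<lambda>n. (n + 1) * A n) * Abs_fps (\<lambda>n. F n (k - 1))) $ d"
    using k by (subst fps_X_mult_mult_nth) (auto intro!: sum.cong dest!: Suc_le_D)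
  also have "\<dots> = (fps_X^k * (fps_deriv (fps_X * C) * C^(k - 1))) $ d"
    unfolding deriv fps_convolution_power[of F A, OF F_0 F_rec] C_def[symmetric]
    using k by (simp add: power_mult_distrib power_eq_if[of fps_X k] mult_ac)
  also have "\<dots> = (2 * (d - k) + (k - 1)) choose (d - k)"
    using k catalan_deriv_mult_power_nth[OF C, of "k - 1" "d - k"]
    by (simp add: fps_X_power_mult_nth)
  also have "\<dots> = (2 * d - k - 1) choose (d - 1)"
    using k binomial_symmetric[of "d - k" "2 * d - k - 1"] by (simp add: algebra_simps)
  finally show ?thesis .
qed

section \<open>Affine permutations and their windows\<close>

lemma periodic_plus_multiple:
  fixes g :: "int \<Rightarrow> 'a::ring_1"
  assumes per: "\<And>i. g (i + D) = g i + c"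
  shows "g (i + m * D) = g i + of_int m * c"
proof -
  have nat_case: "g (i + int n * D) = g i + of_nat n * c" for n :: nat and i
  proof (induction n)
    case (Suc n)
    have "g (i + int (Suc n) * D) = g ((i + int n * D) + D)" by (simp add: algebra_simps)
    also have "\<dots> = g i + of_nat (Suc n) * c" unfolding per Suc by (simp add: algebra_simps)
    finally show ?case .
  qed simp
  show ?thesis
  proof (cases "m \<ge> 0")
    case True
    then show ?thesis using nat_case[where n="nat m"] by simp
  next
    case False
    then have "g i = g ((i + m * D) + int (nat (- m)) * D)" by simp
    also have "\<dots> = g (i + m * D) + of_nat (nat (- m)) * c" by (rule nat_case)
    finally show ?thesis using False by (simp add: algebra_simps of_nat_nat)
  qed
qed

lemma bij_betw_mod_interval:
  fixes D a :: int
  assumes D: "0 < D"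
  shows "bij_betw (\<lambda>x. x mod D) {a..<a + D} {0..<D}"
proof -
  have inj: "inj_on (\<lambda>x. x mod D) {a..<a + D}"
  proof (rule inj_onI)
    fix x y assume x: "x \<in> {a..<a + D}" and y: "y \<in> {a..<a + D}" and eq: "x mod D = y mod D"
    have "D dvd x - y" using eq by (simp add: mod_eq_dvd_iff)
    moreover have "\<bar>x - y\<bar> < D" using x y by auto
    ultimately have "x - y = 0" using dvd_imp_le_int[of "x - y" D] D by fastforce
    then show "x = y" by simp
  qed
  moreover have "(\<lambda>x. x mod D) ` {a..<a + D} = {0..<D}"
    using D card_image[OF inj] by (intro card_subset_eq) auto
  ultimately show ?thesis by (simp add: bij_betw_def)
qed

lemma sum_periodic_interval:
  fixes h :: "int \<Rightarrow> 'a::ring_1" and D :: int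
  assumes D: "0 < D" and per: "\<And>i. h (i + D) = h i"
  shows "sum h {a..<a + D} = sum h {0..<D}"
proof -
  have "h x = h (x mod D)" for x
    using periodic_plus_multiple[of h D 0 "x mod D" "x div D"] per by simp
  then have "sum h {a..<a + D} = sum (\<lambda>x. h (x mod D)) {a..<a + D}" by simp
  also have "\<dots> = sum h {0..<D}" by (rule sum.reindex_bij_betw[OF bij_betw_mod_interval[OF D]])
  finally show ?thesis .
qed

lemma card_periodic_interval:
  fixes D :: int
  assumes "0 < D" and "\<And>i. P (i + D) \<longleftrightarrow> P i"
  shows "card {x \<in> {a..<a + D}. P x} = card {x \<in> {0..<D}. P x}"
  using sum_periodic_interval[of D "\<lambda>x. of_bool (P x) :: int" a] assms
  by (simp add: Int_def conj_commute)

lemma sum_diff_interval_image: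
  fixes f :: "int \<Rightarrow> int"
  assumes "inj_on f {a..<a + D}" "f ` {a..<a + D} = {b..<b + D}" "0 \<le> D"
  shows "(\<Sum>y\<in>{a..<a + D}. f y - y) = D * (b - a)"
proof -
  have "(\<Sum>y\<in>{a..<a + D}. f y) = (\<Sum>v\<in>{b..<b + D}. v)"
    using sum.reindex[OF assms(1), of id] assms(2) by simp
  also have "\<dots> = (\<Sum>y\<in>{a..<a + D}. y + (b - a))"
    by (rule sum.reindex_bij_witness[of _ "\<lambda>y. y + (b - a)" "\<lambda>v. v - (b - a)"]) auto
  finally show ?thesis
    using assms(3) by (simp add: sum_subtractf sum.distrib)
qed

locale affine_permutation =
  fixes d :: nat and \<pi> :: "int \<Rightarrow> int"
  assumes affine: "affine_perm d \<pi>" and d_pos: "0 < d"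
begin

lemma periodic: "\<pi> (i + m * int d) = \<pi> i + m * int d"
  using periodic_plus_multiple[of \<pi> "int d" "int d" i m] affine by (simp add: affine_perm_def)

lemma inj_eq: "\<pi> x = \<pi> y \<longleftrightarrow> x = y"
  using affine by (auto simp: affine_perm_def bij_def inj_def)

lemma sum_interval_eq_0: "(\<Sum>i\<in>{a..<a + int d}. \<pi> i - i) = 0"
  using sum_periodic_interval[of "int d" "\<lambda>i. \<pi> i - i" a] d_pos periodic[of _ 1] affine
  by (simp add: affine_perm_def)

lemma cut_point_shift: "cut_point \<pi> (x + m * int d) \<longleftrightarrow> cut_point \<pi> x"
proof
  assume cut: "cut_point \<pi> (x + m * int d)"
  show "cut_point \<pi> x"
  proof (unfold cut_point_def, intro allI impI)
    fix i k assume "i \<le> x \<and> x < k"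
    then have "\<pi> (i + m * int d) < \<pi> (k + m * int d)" using cut unfolding cut_point_def by simp
    then show "\<pi> i < \<pi> k" by (simp add: periodic)
  qed
next
  assume cut: "cut_point \<pi> x"
  show "cut_point \<pi> (x + m * int d)"
  proof (unfold cut_point_def, intro allI impI)
    fix i k assume "i \<le> x + m * int d \<and> x + m * int d < k"
    then have "\<pi> (i - m * int d) < \<pi> (k - m * int d)" using cut unfolding cut_point_def by simp
    then show "\<pi> i < \<pi> k" using periodic[of "i - m * int d" m] periodic[of "k - m * int d" m] by simp
  qed
qed

lemma cut_point_threshold:
  assumes cut: "cut_point \<pi> c"
  shows "\<exists>M. \<forall>x. \<pi> x \<le> M \<longleftrightarrow> x \<le> c"
proof -
  define W where "W = {c - int d + 1..c}"
  define M where "M = Max (\<pi> ` W)"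
  have W: "finite W" "W \<noteq> {}" using d_pos by (auto simp: W_def)
  have "\<pi> x \<le> M" if x: "x \<le> c" for x
  proof -
    define r where "r = (x - (c - int d + 1)) mod int d"
    define q where "q = (x - (c - int d + 1)) div int d"
    have r: "0 \<le> r" "r < int d" using d_pos by (simp_all add: r_def)
    have x_eq: "x = (c - int d + 1 + r) + q * int d" by (simp add: r_def q_def)
    then have "q * int d < 1 * int d" using x r by linarith
    then have "q < 1" using d_pos by (simp only: mult_less_cancel_right_pos of_nat_0_less_iff)
    then have "q * int d \<le> 0" by (simp add: mult_nonpos_nonneg)
    moreover have "\<pi> (c - int d + 1 + r) \<le> M" unfolding M_def using W r by (auto simp: W_def)
    ultimately show ?thesis unfolding x_eq periodic by linarith
  qed
  moreover have "M < \<pi> y" if "c < y" for y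
  proof -
    have "M \<in> \<pi> ` W" unfolding M_def using W by (intro Max_in) simp_all
    then obtain i where "i \<le> c" "\<pi> i = M" by (auto simp: W_def)
    then show ?thesis using cut that unfolding cut_point_def by blast
  qed
  ultimately show ?thesis by (meson not_le)
qed

lemma threshold_image:
  assumes thr: "\<And>x. \<pi> x \<le> M \<longleftrightarrow> x \<le> c"
  shows "\<pi> ` {c + 1..<c + 1 + int d} = {M + 1..<M + 1 + int d}"
proof (rule card_subset_eq)
  show "\<pi> ` {c + 1..<c + 1 + int d} \<subseteq> {M + 1..<M + 1 + int d}"
  proof
    fix v assume "v \<in> \<pi> ` {c + 1..<c + 1 + int d}"
    then obtain y where "y \<in> {c + 1..<c + 1 + int d}" "v = \<pi> y" by blast
    then have y: "c < y" "y \<le> c + int d" "v = \<pi> y" by auto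
    have "\<pi> y = \<pi> (y - int d) + int d" using periodic[of "y - int d" 1] by simp
    then show "v \<in> {M + 1..<M + 1 + int d}" using y thr[of y] thr[of "y - int d"] by auto
  qed
  show "card (\<pi> ` {c + 1..<c + 1 + int d}) = card {M + 1..<M + 1 + int d}"
    using card_image[of \<pi>] inj_eq by (simp add: inj_on_def)
qed simp

lemma cut_point_le_iff:
  assumes cut: "cut_point \<pi> c"
  shows "\<pi> x \<le> c \<longleftrightarrow> x \<le> c"
proof -
  obtain M where thr: "\<And>x. \<pi> x \<le> M \<longleftrightarrow> x \<le> c" using cut_point_threshold[OF cut] by blast
  \<comment> \<open>\<open>\<pi>\<close> shifts the window after \<open>c\<close> onto the window after \<open>M\<close>, so the zero window sum forces \<open>M = c\<close>.\<close>
  have "int d * (M - c) = (\<Sum>y\<in>{c + 1..<c + 1 + int d}. \<pi> y - y)"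
    using inj_eq threshold_image[OF thr]
    by (subst sum_diff_interval_image) (auto simp: inj_on_def algebra_simps)
  also have "\<dots> = 0" by (rule sum_interval_eq_0)
  finally have "M = c" using d_pos by simp
  then show ?thesis using thr by simp
qed

end

definition window_list :: "nat \<Rightarrow> (int \<Rightarrow> int) \<Rightarrow> int \<Rightarrow> int list" where
  "window_list d \<pi> c = map (\<lambda>i. \<pi> (c + 1 + int i) - (c + 1)) [0..<d]"

lemma length_window_list [simp]: "length (window_list d \<pi> c) = d"
  by (simp add: window_list_def)

lemma nth_window_list [simp]: "i < d \<Longrightarrow> window_list d \<pi> c ! i = \<pi> (c + 1 + int i) - (c + 1)"
  by (simp add: window_list_def)

locale affine_permutation_with_cut = affine_permutation +
  fixes c :: int
  assumes cut: "cut_point \<pi> c"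
begin

lemma le_shifted_cut_iff: "\<pi> x \<le> c + m * int d \<longleftrightarrow> x \<le> c + m * int d"
  using cut cut_point_shift cut_point_le_iff by blast

lemma window_values: "c < y \<Longrightarrow> y \<le> c + int d \<Longrightarrow> c < \<pi> y \<and> \<pi> y \<le> c + int d"
  using le_shifted_cut_iff[of y 0] le_shifted_cut_iff[of y 1] by auto

lemma perm_list_window_list: "perm_list d (window_list d \<pi> c)"
proof -
  have dist: "distinct (window_list d \<pi> c)"
    unfolding distinct_conv_nth by (simp add: inj_eq)
  have "set (window_list d \<pi> c) \<subseteq> {0..<int d}"
  proof
    fix v assume "v \<in> set (window_list d \<pi> c)"
    then obtain i where "i < d" "v = \<pi> (c + 1 + int i) - (c + 1)" by (auto simp: in_set_conv_nth)
    then show "v \<in> {0..<int d}" using window_values[of "c + 1 + int i"] by auto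
  qed
  moreover have "card (set (window_list d \<pi> c)) = card {0..<int d}"
    using distinct_card[OF dist] by simp
  ultimately have "set (window_list d \<pi> c) = {0..<int d}" by (intro card_subset_eq) auto
  with dist show ?thesis by (simp add: perm_list_def)
qed

lemma list_cut_window_list_iff:
  assumes "j \<le> d"
  shows "list_cut (window_list d \<pi> c) j \<longleftrightarrow> cut_point \<pi> (c + int j)"
proof
  assume "cut_point \<pi> (c + int j)"
  then show "list_cut (window_list d \<pi> c) j" by (simp add: list_cut_def cut_point_def)
next
  assume lcut: "list_cut (window_list d \<pi> c) j"
  show "cut_point \<pi> (c + int j)"
  proof (unfold cut_point_def, intro allI impI)
    fix x y assume xy: "x \<le> c + int j \<and> c + int j < y"
    consider "c + int d < y" | "x \<le> c" | "c < x" "y \<le> c + int d" by linarith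
    then show "\<pi> x < \<pi> y"
    proof cases
      case 1
      then have "c + int d < \<pi> y" using le_shifted_cut_iff[of y 1] by simp
      moreover have "\<pi> x \<le> c + int d" using le_shifted_cut_iff[of x 1] xy assms by simp
      ultimately show ?thesis by simp
    next
      case 2
      then show ?thesis using cut xy unfolding cut_point_def by simp
    next
      case 3
      define i where "i = nat (x - c - 1)"
      define l where "l = nat (y - c - 1)"
      have il: "i < j" "j \<le> l" "l < d" and "x = c + 1 + int i" "y = c + 1 + int l"
        using 3 xy by (auto simp: i_def l_def)
      moreover have "window_list d \<pi> c ! i < window_list d \<pi> c ! l"
        using lcut il unfolding list_cut_def by simp
      ultimately show ?thesis by simp
    qed
  qed
qed

lemma avoids312_iff_window_list: "avoids312 \<pi> \<longleftrightarrow> list_avoids312 (window_list d \<pi> c)"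
proof
  assume av: "avoids312 \<pi>"
  show "list_avoids312 (window_list d \<pi> c)"
  proof (unfold list_avoids312_def, clarify)
    fix i j l
    assume "i < j" "j < l" "l < length (window_list d \<pi> c)"
      "window_list d \<pi> c ! j < window_list d \<pi> c ! l" "window_list d \<pi> c ! l < window_list d \<pi> c ! i"
    then have "c + 1 + int i < c + 1 + int j" "c + 1 + int j < c + 1 + int l"
      "\<pi> (c + 1 + int j) < \<pi> (c + 1 + int l)" "\<pi> (c + 1 + int l) < \<pi> (c + 1 + int i)"
      by simp_all
    then show False using av unfolding avoids312_def by blast
  qed
next
  assume av: "list_avoids312 (window_list d \<pi> c)"
  show "avoids312 \<pi>"
  proof (unfold avoids312_def, clarify)
    fix x y z assume "x < y" "y < z" "\<pi> y < \<pi> z" "\<pi> z < \<pi> x"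
    \<comment> \<open>Shift the pattern by a multiple of \<open>d\<close> so that its last entry lies in the window.\<close>
    have d_pos': "0 < int d" using d_pos by simp
    define m where "m = (z - c - 1) div int d"
    define z' where "z' = z - m * int d"
    have "z' = c + 1 + (z - c - 1) mod int d"
      using minus_div_mult_eq_mod[of "z - c - 1" "int d"] by (simp add: z'_def m_def)
    then have z': "c < z'" "z' \<le> c + int d"
      using pos_mod_bound[OF d_pos', of "z - c - 1"] pos_mod_sign[OF d_pos', of "z - c - 1"]
      by linarith+
    have shift: "\<pi> (v - m * int d) = \<pi> v - m * int d" for v
      using periodic[of "v - m * int d" m] by simp
    have "c < \<pi> (x - m * int d)"
      using window_values[OF z'] \<open>\<pi> z < \<pi> x\<close> shift[of z] shift[of x] unfolding z'_def by simp
    then have x: "c < x - m * int d" using cut_point_le_iff[OF cut, of "x - m * int d"] by linarith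
    define i where "i = nat (x - m * int d - c - 1)"
    define j where "j = nat (y - m * int d - c - 1)"
    define l where "l = nat (z' - c - 1)"
    have "i < j" "j < l" "l < d"
      using x z' \<open>x < y\<close> \<open>y < z\<close> by (auto simp: i_def j_def l_def z'_def)
    moreover have "window_list d \<pi> c ! j < window_list d \<pi> c ! l"
      "window_list d \<pi> c ! l < window_list d \<pi> c ! i"
      using calculation x z' \<open>x < y\<close> \<open>y < z\<close> \<open>\<pi> y < \<pi> z\<close> \<open>\<pi> z < \<pi> x\<close> shift[of x] shift[of y] shift[of z]
      by (simp_all add: i_def j_def l_def z'_def)
    ultimately show False using av unfolding list_avoids312_def by auto
  qed
qed

lemma num_cut_points_eq: "num_cut_points d \<pi> = num_list_cuts (window_list d \<pi> c)"
proof -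
  have "num_cut_points d \<pi> = card {r \<in> {c + 1..<c + 1 + int d}. cut_point \<pi> r}"
    unfolding num_cut_points_def using d_pos cut_point_shift[of _ 1]
    by (intro card_periodic_interval[symmetric]) simp_all
  also have "{r \<in> {c + 1..<c + 1 + int d}. cut_point \<pi> r}
      = (\<lambda>j. c + int j) ` {j \<in> {1..d}. list_cut (window_list d \<pi> c) j}"
    using list_cut_window_list_iff
    apply (auto simp: image_iff)
    subgoal for r by (rule exI[of _ "nat (r - c)"]) auto
    done
  also have "card \<dots> = num_list_cuts (window_list d \<pi> c)"
    by (simp add: card_image inj_on_def num_list_cuts_def)
  finally show ?thesis .
qed

lemma no_cut_above_iff:
  assumes "0 \<le> c" "c < int d"
  shows "(\<forall>r \<in> {0..<int d}. cut_point \<pi> r \<longrightarrow> r \<le> c)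
    \<longleftrightarrow> (\<forall>j \<in> {1..<nat (int d - c)}. \<not> list_cut (window_list d \<pi> c) j)"
proof -
  have "(\<forall>r \<in> {0..<int d}. cut_point \<pi> r \<longrightarrow> r \<le> c)
      \<longleftrightarrow> (\<forall>j \<in> {1..<nat (int d - c)}. \<not> cut_point \<pi> (c + int j))"
  proof
    assume "\<forall>r \<in> {0..<int d}. cut_point \<pi> r \<longrightarrow> r \<le> c"
    then show "\<forall>j \<in> {1..<nat (int d - c)}. \<not> cut_point \<pi> (c + int j)"
      using assms by (auto simp: zless_nat_eq_int_zless)
  next
    assume none: "\<forall>j \<in> {1..<nat (int d - c)}. \<not> cut_point \<pi> (c + int j)"
    show "\<forall>r \<in> {0..<int d}. cut_point \<pi> r \<longrightarrow> r \<le> c"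
    proof (intro ballI impI)
      fix r assume r: "r \<in> {0..<int d}" "cut_point \<pi> r"
      show "r \<le> c"
      proof (rule ccontr)
        assume "\<not> r \<le> c"
        then have "nat (r - c) \<in> {1..<nat (int d - c)}" "c + int (nat (r - c)) = r" using r by auto
        then show False using none r by metis
      qed
    qed
  qed
  also have "\<dots> \<longleftrightarrow> (\<forall>j \<in> {1..<nat (int d - c)}. \<not> list_cut (window_list d \<pi> c) j)"
  proof -
    have "j \<le> d" if "j < nat (int d - c)" for j using that assms by (simp add: zless_nat_eq_int_zless)
    then show ?thesis using list_cut_window_list_iff by auto
  qed
  finally show ?thesis .
qed

end

definition affine_extension :: "nat \<Rightarrow> int \<Rightarrow> int list \<Rightarrow> int \<Rightarrow> int" where
  "affine_extension d c s x =
     s ! nat ((x - c - 1) mod int d) + c + 1 + int d * ((x - c - 1) div int d)"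

locale window_permutation =
  fixes d :: nat and c :: int and s :: "int list"
  assumes d_pos: "0 < d" and perm: "perm_list d s"
begin

abbreviation ext :: "int \<Rightarrow> int" where "ext \<equiv> affine_extension d c s"

lemma length_s: "length s = d"
  using perm by (rule perm_list_length)

lemma nth_s_range: "j < d \<Longrightarrow> 0 \<le> s!j \<and> s!j < int d"
  using perm length_s nth_mem[of j s] by (auto simp: perm_list_def)

lemma decompose:
  obtains j q where "j < d" "x = c + 1 + int j + q * int d"
proof
  show "nat ((x - c - 1) mod int d) < d" using d_pos by (simp add: nat_less_iff)
  show "x = c + 1 + int (nat ((x - c - 1) mod int d)) + ((x - c - 1) div int d) * int d"
    using d_pos by (simp add: mod_div_mult_eq)
qed

lemma ext_at: "j < d \<Longrightarrow> ext (c + 1 + int j + q * int d) = s!j + c + 1 + q * int d"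
  by (simp add: affine_extension_def algebra_simps)

lemma ext_periodic: "ext (x + int d) = ext x + int d"
proof -
  obtain j q where "j < d" "x = c + 1 + int j + q * int d" by (rule decompose)
  then show ?thesis using ext_at[of j q] ext_at[of j "q + 1"] by (simp add: algebra_simps)
qed

lemma ext_inj: "inj ext"
proof (rule injI)
  fix x y assume eq: "ext x = ext y"
  obtain j q where j: "j < d" "x = c + 1 + int j + q * int d" by (rule decompose)
  obtain j' q' where j': "j' < d" "y = c + 1 + int j' + q' * int d" by (rule decompose)
  have eq': "s!j + q * int d = s!j' + q' * int d" using eq j j' ext_at by simp
  have "(s!j + q * int d) div int d = q" "(s!j' + q' * int d) div int d = q'"
    using nth_s_range[OF j(1)] nth_s_range[OF j'(1)] by simp_all
  then have "q = q'" using eq' by simp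
  then have "s!j = s!j'" using eq' by simp
  then have "j = j'" using perm j j' length_s by (simp add: perm_list_def nth_eq_iff_index_eq)
  then show "x = y" using j j' \<open>q = q'\<close> by simp
qed

lemma ext_surj: "surj ext"
proof -
  have "v \<in> range ext" for v
  proof -
    obtain r q where r: "r < d" "v = c + 1 + int r + q * int d" by (rule decompose)
    have "int r \<in> set s" using r perm by (simp add: perm_list_def)
    then obtain j where "j < d" "s!j = int r" using length_s by (auto simp: in_set_conv_nth)
    then have "ext (c + 1 + int j + q * int d) = v" using ext_at r by simp
    then show ?thesis by (metis rangeI)
  qed
  then show ?thesis by blast
qed

lemma ext_window_image: "ext ` {c + 1..<c + 1 + int d} = {c + 1..<c + 1 + int d}"
proof (rule card_subset_eq)
  show "ext ` {c + 1..<c + 1 + int d} \<subseteq> {c + 1..<c + 1 + int d}"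
  proof
    fix v assume "v \<in> ext ` {c + 1..<c + 1 + int d}"
    then obtain y where y: "y \<in> {c + 1..<c + 1 + int d}" "v = ext y" by blast
    define j where "j = nat (y - c - 1)"
    have "j < d" "y = c + 1 + int j + 0 * int d" using y by (auto simp: j_def)
    then show "v \<in> {c + 1..<c + 1 + int d}" using y ext_at[of j 0] nth_s_range[of j] by auto
  qed
  show "card (ext ` {c + 1..<c + 1 + int d}) = card {c + 1..<c + 1 + int d}"
    using ext_inj by (simp add: card_image inj_on_subset)
qed simp

lemma affine_perm_ext: "affine_perm d ext"
proof -
  have "(\<Sum>i\<in>{0..<int d}. ext i - i) = (\<Sum>i\<in>{c + 1..<c + 1 + int d}. ext i - i)"
    using d_pos ext_periodic by (intro sum_periodic_interval[symmetric]) simp_all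
  also have "\<dots> = int d * ((c + 1) - (c + 1))"
    using ext_window_image by (intro sum_diff_interval_image) (auto intro: inj_on_subset[OF ext_inj])
  finally show ?thesis
    using ext_inj ext_surj ext_periodic by (simp add: affine_perm_def bij_def)
qed

lemma cut_point_ext: "cut_point ext c"
proof (unfold cut_point_def, intro allI impI)
  fix x y assume xy: "x \<le> c \<and> c < y"
  obtain j q where j: "j < d" "x = c + 1 + int j + q * int d" by (rule decompose)
  obtain j' q' where j': "j' < d" "y = c + 1 + int j' + q' * int d" by (rule decompose)
  have d_pos': "0 < int d" using d_pos by simp
  have "q * int d < 0 * int d" using j xy by simp
  then have "q < 0" by (simp only: mult_less_cancel_right_pos[OF d_pos'])
  then have "q \<le> -1" by simp
  then have "q * int d \<le> - int d" using mult_right_mono[of q "-1" "int d"] by simp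
  moreover have "(-1) * int d < q' * int d" using j' xy by simp
  then have "-1 < q'" by (simp only: mult_less_cancel_right_pos[OF d_pos'])
  then have "0 \<le> q' * int d" by simp
  ultimately show "ext x < ext y"
    using j j' ext_at nth_s_range[OF j(1)] nth_s_range[OF j'(1)] by simp
qed

lemma window_list_ext: "window_list d ext c = s"
  using ext_at[of _ 0] by (intro nth_equalityI) (simp_all add: length_s)

end

lemma (in affine_permutation_with_cut) affine_extension_window_list:
  "affine_extension d c (window_list d \<pi> c) = \<pi>"
proof
  fix x
  interpret window_permutation d c "window_list d \<pi> c"
    using d_pos perm_list_window_list by unfold_locales
  obtain j q where j: "j < d" "x = c + 1 + int j + q * int d" by (rule decompose)
  then show "ext x = \<pi> x" using ext_at[of j q] periodic[of "c + 1 + int j" q] by simp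
qed

section \<open>The bijection with marked 312-avoiding permutations\<close>

definition last_cut :: "nat \<Rightarrow> (int \<Rightarrow> int) \<Rightarrow> int" where
  "last_cut d \<pi> = Max {r \<in> {0..<int d}. cut_point \<pi> r}"

lemma last_cut_is_max_cut:
  assumes "num_cut_points d \<pi> \<noteq> 0"
  shows "last_cut d \<pi> \<in> {0..<int d}" and "cut_point \<pi> (last_cut d \<pi>)"
    and "\<forall>r \<in> {0..<int d}. cut_point \<pi> r \<longrightarrow> r \<le> last_cut d \<pi>"
proof -
  have fin: "finite {r \<in> {0..<int d}. cut_point \<pi> r}" by (rule finite_subset[of _ "{0..<int d}"]) auto
  moreover have "{r \<in> {0..<int d}. cut_point \<pi> r} \<noteq> {}"
    using assms unfolding num_cut_points_def by (metis card.empty)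
  ultimately have "last_cut d \<pi> \<in> {r \<in> {0..<int d}. cut_point \<pi> r}"
    unfolding last_cut_def by (rule Max_in)
  then show "last_cut d \<pi> \<in> {0..<int d}" and "cut_point \<pi> (last_cut d \<pi>)" by simp_all
  show "\<forall>r \<in> {0..<int d}. cut_point \<pi> r \<longrightarrow> r \<le> last_cut d \<pi>"
    using fin by (simp add: last_cut_def)
qed

lemma last_cut_eqI:
  assumes "c \<in> {0..<int d}" "cut_point \<pi> c" "\<forall>r \<in> {0..<int d}. cut_point \<pi> r \<longrightarrow> r \<le> c"
  shows "last_cut d \<pi> = c"
  unfolding last_cut_def using assms
  by (intro Max_eqI) (auto intro: finite_subset[of _ "{0..<int d}"])

definition marked_window :: "nat \<Rightarrow> (int \<Rightarrow> int) \<Rightarrow> int list \<times> nat" where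
  "marked_window d \<pi> = (window_list d \<pi> (last_cut d \<pi>), nat (int d - last_cut d \<pi>))"

definition marked_extension :: "nat \<Rightarrow> int list \<times> nat \<Rightarrow> int \<Rightarrow> int" where
  "marked_extension d = (\<lambda>(s, t). affine_extension d (int d - int t) s)"

lemma marked_window_mem:
  assumes "affine_perm d \<pi>" "0 < d" "avoids312 \<pi>" "num_cut_points d \<pi> = k" "1 \<le> k"
  shows "marked_window d \<pi> \<in> marked_Av312 d k" and "marked_extension d (marked_window d \<pi>) = \<pi>"
proof -
  let ?c = "last_cut d \<pi>"
  have c: "?c \<in> {0..<int d}" "cut_point \<pi> ?c" "\<forall>r \<in> {0..<int d}. cut_point \<pi> r \<longrightarrow> r \<le> ?c"
    using last_cut_is_max_cut[of d \<pi>] assms(4,5) by auto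
  interpret affine_permutation_with_cut d \<pi> ?c
    using assms(1,2) c(2) by unfold_locales
  show "marked_window d \<pi> \<in> marked_Av312 d k"
    using c perm_list_window_list assms(3,4) avoids312_iff_window_list num_cut_points_eq
      no_cut_above_iff by (auto simp: marked_window_def marked_Av312_def Av312_def)
  show "marked_extension d (marked_window d \<pi>) = \<pi>"
    using c affine_extension_window_list by (simp add: marked_window_def marked_extension_def)
qed

lemma marked_extension_mem:
  assumes "(s, t) \<in> marked_Av312 d k" "0 < d"
  shows "marked_extension d (s, t) \<in> {\<pi>. affine_perm d \<pi> \<and> avoids312 \<pi> \<and> num_cut_points d \<pi> = k}"
    and "marked_window d (marked_extension d (s, t)) = (s, t)"
proof -
  let ?c = "int d - int t" and ?\<pi> = "marked_extension d (s, t)"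
  have s: "s \<in> Av312 d" "num_list_cuts s = k" and t: "t \<in> {1..d}"
    and no_cut: "\<forall>j\<in>{1..<t}. \<not> list_cut s j"
    using assms(1) by (auto simp: marked_Av312_def)
  interpret window_permutation d ?c s
    using assms(2) s by unfold_locales (simp_all add: Av312_def)
  interpret affine_permutation_with_cut d ?\<pi> ?c
    using assms(2) affine_perm_ext cut_point_ext by unfold_locales (simp_all add: marked_extension_def)
  have window: "window_list d ?\<pi> ?c = s"
    using window_list_ext by (simp add: marked_extension_def)
  show "?\<pi> \<in> {\<pi>. affine_perm d \<pi> \<and> avoids312 \<pi> \<and> num_cut_points d \<pi> = k}"
    using affine avoids312_iff_window_list num_cut_points_eq window s by (simp add: Av312_def)
  have "last_cut d ?\<pi> = ?c"
    using t no_cut no_cut_above_iff window cut by (intro last_cut_eqI) auto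
  then show "marked_window d ?\<pi> = (s, t)"
    using window t by (simp add: marked_window_def)
qed

lemma card_affine_312_eq_card_marked:
  assumes "0 < d" "1 \<le> k"
  shows "card {\<pi>. affine_perm d \<pi> \<and> avoids312 \<pi> \<and> num_cut_points d \<pi> = k} = card (marked_Av312 d k)"
proof (rule bij_betw_same_card[of "marked_window d"], rule bij_betw_byWitness[where f'="marked_extension d"])
  show "\<forall>\<pi> \<in> {\<pi>. affine_perm d \<pi> \<and> avoids312 \<pi> \<and> num_cut_points d \<pi> = k}.
      marked_extension d (marked_window d \<pi>) = \<pi>"
    using marked_window_mem assms by blast
  show "marked_window d ` {\<pi>. affine_perm d \<pi> \<and> avoids312 \<pi> \<and> num_cut_points d \<pi> = k}
      \<subseteq> marked_Av312 d k"
    using marked_window_mem assms by blast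
  show "\<forall>st \<in> marked_Av312 d k. marked_window d (marked_extension d st) = st"
    using marked_extension_mem assms by fast
  show "marked_extension d ` marked_Av312 d k
      \<subseteq> {\<pi>. affine_perm d \<pi> \<and> avoids312 \<pi> \<and> num_cut_points d \<pi> = k}"
    using marked_extension_mem assms by fast
qed

theorem theorem4p2:
  fixes d k :: nat
  assumes "1 \<le> k" and "k \<le> d"
  shows "card {\<pi>. affine_perm d \<pi> \<and> avoids312 \<pi> \<and> num_cut_points d \<pi> = k}
         = (2 * d - k - 1) choose (d - 1)"
proof -
  have d: "1 \<le> d" using assms by simp
  have "card {\<pi>. affine_perm d \<pi> \<and> avoids312 \<pi> \<and> num_cut_points d \<pi> = k} = card (marked_Av312 d k)"
    using assms by (intro card_affine_312_eq_card_marked) simp_all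
  also have "\<dots> = (\<Sum>p=1..d. p * card (Av312 (p - 1)) * card {b \<in> Av312 (d - p). num_list_cuts b = k - 1})"
    using d assms(1) by (rule card_marked_Av312)
  also have "\<dots> = (2 * d - k - 1) choose (d - 1)"
    using card_Av312_rec card_Av312_num_list_cuts_0 card_Av312_num_list_cuts_Suc assms
    by (intro catalan_weighted_convolution) (simp_all add: Av312_0)
  finally show ?thesis .
qed

end
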